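(* Let $w,x,y,z$ be nodes of a median graph and $B=\big((I_{yw}\cap I_{xw})\cup(I_{yw}\cap I_{zw})\big)\setminus\{w\}$. Then $B=\emptyset$ if and only if $w\in I_{y\,m(x,y,z)}$.
   Context: $G$ is a finite connected unweighted undirected median graph: with shortest-path distance $d$ and $I_{ab}=\{v:d(a,v)+d(v,b)=d(a,b)\}$, $\lvert I_{ab}\cap I_{ac}\cap I_{bc}\rvert=1$ for all nodes $a,b,c$, and $m(a,b,c)$ denotes that unique node. (In the paper, $B$ is the set of bargaining points of participant $y$ when the current winner is $w$ and the other group members are $x,z$.) *)

theory Defs
  imports Main
begin

inductive walk_len :: "('a \<Rightarrow> 'a \<Rightarrow> bool) \<Rightarrow> nat \<Rightarrow> 'a \<Rightarrow> 'a \<Rightarrow> bool"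
  for E where
  walk_nil: "walk_len E 0 u u"
| walk_cons: "E u v \<Longrightarrow> walk_len E n v w \<Longrightarrow> walk_len E (Suc n) u w"

definition simple_graph :: "'a set \<Rightarrow> ('a \<Rightarrow> 'a \<Rightarrow> bool) \<Rightarrow> bool" where
  "simple_graph V E \<longleftrightarrow>
     (\<forall>u v. E u v \<longrightarrow> u \<in> V \<and> v \<in> V) \<and>
     (\<forall>u v. E u v \<longrightarrow> E v u) \<and> (\<forall>u. \<not> E u u)"

definition connected_graph :: "'a set \<Rightarrow> ('a \<Rightarrow> 'a \<Rightarrow> bool) \<Rightarrow> bool" where
  "connected_graph V E \<longleftrightarrow> V \<noteq> {} \<and> (\<forall>u\<in>V. \<forall>v\<in>V. \<exists>n. walk_len E n u v)"

definition gdist :: "('a \<Rightarrow> 'a \<Rightarrow> bool) \<Rightarrow> 'a \<Rightarrow> 'a \<Rightarrow> nat" where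
  "gdist E u v = (LEAST n. walk_len E n u v)"

definition interval :: "'a set \<Rightarrow> ('a \<Rightarrow> 'a \<Rightarrow> bool) \<Rightarrow> 'a \<Rightarrow> 'a \<Rightarrow> 'a set" where
  "interval V E a b = {v \<in> V. gdist E a v + gdist E v b = gdist E a b}"

definition median_graph :: "'a set \<Rightarrow> ('a \<Rightarrow> 'a \<Rightarrow> bool) \<Rightarrow> bool" where
  "median_graph V E \<longleftrightarrow> finite V \<and> simple_graph V E \<and> connected_graph V E \<and>
     (\<forall>a\<in>V. \<forall>b\<in>V. \<forall>c\<in>V.
        card (interval V E a b \<inter> interval V E a c \<inter> interval V E b c) = 1)"

definition median :: "'a set \<Rightarrow> ('a \<Rightarrow> 'a \<Rightarrow> bool) \<Rightarrow> 'a \<Rightarrow> 'a \<Rightarrow> 'a \<Rightarrow> 'a" where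
  "median V E a b c =
     (THE m. m \<in> interval V E a b \<inter> interval V E a c \<inter> interval V E b c)"

end

theory Submission
  imports Defs
begin

text \<open>Two facts carry the proof. First, in a median graph \<open>I\<^sub>y\<^sub>w \<inter> I\<^sub>a\<^sub>w \<subseteq> {w}\<close> holds exactly
  when \<open>w \<in> I\<^sub>y\<^sub>a\<close>, because \<open>m(y,a,w)\<close> lies in that intersection. So \<open>B = {}\<close> says
  \<open>w \<in> I\<^sub>y\<^sub>x \<inter> I\<^sub>y\<^sub>z\<close>. Second, \<open>I\<^sub>y\<^sub>x \<inter> I\<^sub>y\<^sub>z = I\<^sub>y\<^sub>m\<close> for \<open>m = m(x,y,z)\<close>: one inclusion is
  concatenation of geodesics; for the other, \<open>u = m(w,x,z)\<close> turns out to be a median of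
  \<open>x, y, z\<close>, hence equals \<open>m\<close>, and \<open>w\<close> lies on a geodesic from \<open>y\<close> to \<open>u\<close>.\<close>

lemma walk_len_append:
  "walk_len E n u v \<Longrightarrow> walk_len E k v w \<Longrightarrow> walk_len E (n + k) u w"
  by (induction rule: walk_len.induct) (auto intro: walk_len.intros)

lemma walk_len_snoc: "walk_len E n u v \<Longrightarrow> E v w \<Longrightarrow> walk_len E (Suc n) u w"
  using walk_len_append[of E n u v 1 w] by (auto intro: walk_len.intros)

lemma walk_len_rev:
  assumes "\<And>a b. E a b \<Longrightarrow> E b a" and "walk_len E n u v"
  shows "walk_len E n v u"
  using assms(2) by (induction rule: walk_len.induct) (auto intro: walk_len.intros walk_len_snoc assms(1))

lemma gdist_commute:
  assumes "\<And>a b. E a b \<Longrightarrow> E b a"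
  shows "gdist E u v = gdist E v u"
proof -
  have "walk_len E n u v \<longleftrightarrow> walk_len E n v u" for n
    using walk_len_rev[of E, OF assms] by blast
  then show ?thesis by (simp add: gdist_def)
qed

lemma walk_len_gdist:
  "connected_graph V E \<Longrightarrow> u \<in> V \<Longrightarrow> v \<in> V \<Longrightarrow> walk_len E (gdist E u v) u v"
  unfolding gdist_def connected_graph_def by (metis LeastI)

lemma gdist_triangle:
  assumes "connected_graph V E" "u \<in> V" "v \<in> V" "w \<in> V"
  shows "gdist E u w \<le> gdist E u v + gdist E v w"
proof -
  have "walk_len E (gdist E u v + gdist E v w) u w"
    using walk_len_append walk_len_gdist assms by metis
  then show ?thesis unfolding gdist_def by (rule Least_le)
qed

lemma gdist_eq_0_imp_eq:
  "connected_graph V E \<Longrightarrow> u \<in> V \<Longrightarrow> v \<in> V \<Longrightarrow> gdist E u v = 0 \<Longrightarrow> u = v"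
  using walk_len_gdist[of V E u v] by (auto elim: walk_len.cases)

lemma mem_interval_iff:
  "v \<in> interval V E a b \<longleftrightarrow> v \<in> V \<and> gdist E a v + gdist E v b = gdist E a b"
  by (simp add: interval_def)

lemma interval_commute:
  "(\<And>a b. E a b \<Longrightarrow> E b a) \<Longrightarrow> interval V E a b = interval V E b a"
  unfolding interval_def using gdist_commute[of E] by auto

text \<open>Both lemmas below compare the path \<open>y \<leadsto> w \<leadsto> u \<leadsto> x\<close> with \<open>d(y,x)\<close>.\<close>

lemma interval_trans:
  assumes "connected_graph V E" "y \<in> V" "x \<in> V"
    and "w \<in> interval V E y u" "u \<in> interval V E y x"
  shows "w \<in> interval V E y x"
proof -
  have "w \<in> V" "u \<in> V" using assms(4,5) by (auto simp: mem_interval_iff)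
  then have "gdist E y x \<le> gdist E y w + gdist E w x"
    and "gdist E w x \<le> gdist E w u + gdist E u x"
    using gdist_triangle[OF assms(1)] assms(2,3) by auto
  then show ?thesis using assms(4,5) by (auto simp: mem_interval_iff)
qed

lemma interval_split:
  assumes "connected_graph V E" "y \<in> V" "x \<in> V"
    and "w \<in> interval V E y x" "u \<in> interval V E w x"
  shows "u \<in> interval V E y x \<and> w \<in> interval V E y u"
proof -
  have "w \<in> V" "u \<in> V" using assms(4,5) by (auto simp: mem_interval_iff)
  then have "gdist E y x \<le> gdist E y u + gdist E u x"
    and "gdist E y u \<le> gdist E y w + gdist E w u"
    using gdist_triangle[OF assms(1)] assms(2,3) by auto
  then show ?thesis using assms(4,5) \<open>w \<in> V\<close> \<open>u \<in> V\<close> by (auto simp: mem_interval_iff)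
qed

lemma median_graph_sym: "median_graph V E \<Longrightarrow> E u v \<Longrightarrow> E v u"
  by (auto simp: median_graph_def simple_graph_def)

lemma median_graph_connected: "median_graph V E \<Longrightarrow> connected_graph V E"
  by (simp add: median_graph_def)

lemma median_mem_intervals_unique:
  assumes "median_graph V E" "a \<in> V" "b \<in> V" "c \<in> V"
  shows "median V E a b c \<in> interval V E a b \<inter> interval V E a c \<inter> interval V E b c"
    and "u \<in> interval V E a b \<inter> interval V E a c \<inter> interval V E b c \<Longrightarrow> u = median V E a b c"
proof -
  have "card (interval V E a b \<inter> interval V E a c \<inter> interval V E b c) = 1"
    using assms unfolding median_graph_def by blast
  then obtain m where m: "interval V E a b \<inter> interval V E a c \<inter> interval V E b c = {m}"
    by (rule card_1_singletonE)
  then have "median V E a b c = m" unfolding median_def by auto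
  with m show "median V E a b c \<in> interval V E a b \<inter> interval V E a c \<inter> interval V E b c"
    and "u \<in> interval V E a b \<inter> interval V E a c \<inter> interval V E b c \<Longrightarrow> u = median V E a b c"
    by auto
qed

lemma interval_inter_subset_singleton_iff:
  assumes g: "median_graph V E" and "y \<in> V" "a \<in> V" "w \<in> V"
  shows "interval V E y w \<inter> interval V E a w \<subseteq> {w} \<longleftrightarrow> w \<in> interval V E y a"
proof
  assume "interval V E y w \<inter> interval V E a w \<subseteq> {w}"
  then have "median V E y a w = w"
    using median_mem_intervals_unique(1)[OF g \<open>y \<in> V\<close> \<open>a \<in> V\<close> \<open>w \<in> V\<close>] by blast
  then show "w \<in> interval V E y a"
    using median_mem_intervals_unique(1)[OF g \<open>y \<in> V\<close> \<open>a \<in> V\<close> \<open>w \<in> V\<close>] by auto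
next
  assume w: "w \<in> interval V E y a"
  show "interval V E y w \<inter> interval V E a w \<subseteq> {w}"
  proof
    fix v assume v: "v \<in> interval V E y w \<inter> interval V E a w"
    then have "v \<in> V" by (simp add: mem_interval_iff)
    have "gdist E y a \<le> gdist E y v + gdist E v a"
      using gdist_triangle[OF median_graph_connected[OF g]] \<open>y \<in> V\<close> \<open>v \<in> V\<close> \<open>a \<in> V\<close> by blast
    moreover have "gdist E v a = gdist E a v" "gdist E w a = gdist E a w"
      using gdist_commute median_graph_sym[OF g] by metis+
    ultimately have "gdist E v w = 0" using v w by (auto simp: mem_interval_iff)
    then show "v \<in> {w}"
      using gdist_eq_0_imp_eq[OF median_graph_connected[OF g] \<open>v \<in> V\<close> \<open>w \<in> V\<close>] by simp
  qed
qed

lemma mem_interval_median_iff: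
  assumes g: "median_graph V E" and V: "w \<in> V" "x \<in> V" "y \<in> V" "z \<in> V"
  shows "w \<in> interval V E y (median V E x y z) \<longleftrightarrow>
         w \<in> interval V E y x \<and> w \<in> interval V E y z"
proof -
  have conn: "connected_graph V E" using median_graph_connected[OF g] .
  have comm: "\<And>a b. interval V E a b = interval V E b a"
    using interval_commute median_graph_sym[OF g] by metis
  let ?m = "median V E x y z"
  have m: "?m \<in> interval V E y x" "?m \<in> interval V E y z" "?m \<in> interval V E x z"
    using median_mem_intervals_unique(1)[OF g V(2-4)] comm by auto
  show ?thesis
  proof
    assume "w \<in> interval V E y ?m"
    then show "w \<in> interval V E y x \<and> w \<in> interval V E y z"
      using interval_trans[OF conn] m V by blast
  next
    assume w: "w \<in> interval V E y x \<and> w \<in> interval V E y z"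
    let ?u = "median V E w x z"
    have u: "?u \<in> interval V E w x" "?u \<in> interval V E w z" "?u \<in> interval V E x z"
      using median_mem_intervals_unique(1)[OF g V(1,2,4)] by auto
    have "?u \<in> interval V E y x" "?u \<in> interval V E y z" "w \<in> interval V E y ?u"
      using interval_split[OF conn] w u V by blast+
    moreover from this have "?u = ?m"
      using median_mem_intervals_unique(2)[OF g V(2-4)] u(3) comm by blast
    ultimately show "w \<in> interval V E y ?m" by simp
  qed
qed

theorem lemmaI7:
  fixes V :: "'a set" and E :: "'a \<Rightarrow> 'a \<Rightarrow> bool" and w x y z :: 'a
  assumes "median_graph V E"
    and "w \<in> V" "x \<in> V" "y \<in> V" "z \<in> V"
  shows "((interval V E y w \<inter> interval V E x w) \<union> (interval V E y w \<inter> interval V E z w)) - {w} = {}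
         \<longleftrightarrow> w \<in> interval V E y (median V E x y z)"
proof -
  have "((interval V E y w \<inter> interval V E x w) \<union> (interval V E y w \<inter> interval V E z w)) - {w} = {}
     \<longleftrightarrow> interval V E y w \<inter> interval V E x w \<subseteq> {w} \<and> interval V E y w \<inter> interval V E z w \<subseteq> {w}"
    by blast
  also have "\<dots> \<longleftrightarrow> w \<in> interval V E y x \<and> w \<in> interval V E y z"
    using interval_inter_subset_singleton_iff assms by metis
  also have "\<dots> \<longleftrightarrow> w \<in> interval V E y (median V E x y z)"
    using mem_interval_median_iff assms by metis
  finally show ?thesis .
qed

end
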